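(* Let $s>0$, let $\mu$ be a Radon measure on $\mathbb{R}^d$, and let $\varphi:[0,\infty)\to\mathbb{R}$ be a $C^\infty$ function supported in $[0,2]$ which is constant on $[0,1/2]$. Then for every $x\in\mathbb{R}^d$ and $0\le r_1<r_2$, $$\int_{r_1}^{r_2}|\Delta^s_{\mu,\varphi}(x,r)|\,\frac{dr}{r}\;\le\; c\int_{r_1/2}^{2r_2}|\Delta^s_\mu(x,r)|\,\frac{dr}{r},$$ where $c$ depends only on $\varphi$.
   Context: For a Borel function $\varphi:[0,\infty)\to\mathbb{R}$ and $t>0$, set $\varphi_t(u)=t^{-s}\varphi(u/t)$, and $$\Delta^s_{\mu,\varphi}(x,t)=\int\big(\varphi_t(|y-x|)-\varphi_{2t}(|y-x|)\big)\,d\mu(y).$$ Also $\Delta^s_\mu(x,r)=\frac{\mu(B(x,r))}{r^s}-\frac{\mu(B(x,2r))}{(2r)^s}$, with $B(x,r)$ the open ball. *)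

theory Defs
  imports "HOL-Analysis.Analysis"
begin

definition C_inf_on :: "real set \<Rightarrow> (real \<Rightarrow> real) \<Rightarrow> bool" where
  "C_inf_on S f \<longleftrightarrow> (\<forall>n. ((deriv ^^ n) f) differentiable_on S)"

definition radon_measure :: "'a::euclidean_space measure \<Rightarrow> bool" where
  "radon_measure M \<longleftrightarrow> sets M = sets borel \<and> (\<forall>K. compact K \<longrightarrow> emeasure M K < \<infinity>)"

definition phi_scale :: "real \<Rightarrow> (real \<Rightarrow> real) \<Rightarrow> real \<Rightarrow> real \<Rightarrow> real" where
  "phi_scale s \<phi> t u = t powr (-s) * \<phi> (u / t)"

definition Delta_phi :: "real \<Rightarrow> 'a::euclidean_space measure \<Rightarrow> (real \<Rightarrow> real) \<Rightarrow> 'a \<Rightarrow> real \<Rightarrow> real" where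
  "Delta_phi s \<mu> \<phi> x t =
     (\<integral>y. (phi_scale s \<phi> t (dist y x) - phi_scale s \<phi> (2*t) (dist y x)) \<partial>\<mu>)"

definition Delta :: "real \<Rightarrow> 'a::euclidean_space measure \<Rightarrow> 'a \<Rightarrow> real \<Rightarrow> real" where
  "Delta s \<mu> x r = measure \<mu> (ball x r) / r powr s - measure \<mu> (ball x (2*r)) / (2*r) powr s"

end

theory Submission
  imports Defs
begin

text \<open>Write \<open>\<phi>(u) = -\<integral>\<^sub>u\<^sup>\<infinity> \<phi>'(v) dv\<close>, where \<open>\<phi>'\<close> is supported in \<open>(1/2, 2)\<close>. Inserting this into
  the definition of \<open>\<Delta>\<^sub>\<phi>\<close> and exchanging the integrals gives
  \<open>\<Delta>\<^sub>\<phi>(x,t) = -\<integral> \<phi>'(v) v\<^sup>s \<Delta>(x,tv) dv\<close>, a superposition of dilates of \<open>\<Delta>\<close> by factors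
  \<open>v \<in> (1/2, 2)\<close>. Integrating \<open>|\<Delta>\<^sub>\<phi>(x,t)| dt/t\<close> over \<open>[r1, r2]\<close> and exchanging once more,
  the substitution \<open>r = tv\<close> bounds the contribution of each dilate by the integral of
  \<open>|\<Delta>(x,r)| dr/r\<close> over \<open>[r1/2, 2 r2]\<close>, so \<open>c = \<integral> |\<phi>'(v)| v\<^sup>s dv\<close> works.\<close>

lemma radon_measure_sets: "radon_measure \<mu> \<Longrightarrow> sets \<mu> = sets borel"
  by (simp add: radon_measure_def)

lemma radon_measure_space: "radon_measure \<mu> \<Longrightarrow> space \<mu> = UNIV"
  by (metis radon_measure_sets sets_eq_imp_space_eq space_borel)

lemma radon_measure_cball_finite: "radon_measure \<mu> \<Longrightarrow> emeasure \<mu> (cball x r) < \<infinity>"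
  by (simp add: radon_measure_def)

lemma radon_measure_ball_finite:
  assumes "radon_measure \<mu>"
  shows "emeasure \<mu> (ball x r) < \<infinity>"
proof -
  have "emeasure \<mu> (ball x r) \<le> emeasure \<mu> (cball x r)"
    by (rule emeasure_mono) (auto simp: radon_measure_sets[OF assms])
  then show ?thesis using radon_measure_cball_finite[OF assms] by (meson order.strict_trans1)
qed

lemma radon_measure_sigma_finite:
  assumes "radon_measure (\<mu>::'a::euclidean_space measure)"
  shows "sigma_finite_measure \<mu>"
proof (rule sigma_finite_measure.intro)
  let ?A = "range (\<lambda>n::nat. cball (0::'a) (real n))"
  have "\<Union>?A = UNIV"
    by (auto intro: real_arch_simple)
  then show "\<exists>A. countable A \<and> A \<subseteq> sets \<mu> \<and> \<Union> A = space \<mu> \<and> (\<forall>a\<in>A. emeasure \<mu> a \<noteq> \<infinity>)"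
    using radon_measure_cball_finite[OF assms] radon_measure_sets[OF assms]
      radon_measure_space[OF assms]
    by (intro exI[of _ ?A]) (auto simp: less_top[symmetric])
qed

lemma mono_measure_ball:
  assumes "radon_measure \<mu>"
  shows "mono (\<lambda>r. measure \<mu> (ball x r))"
proof (rule monoI)
  fix r r' :: real assume "r \<le> r'"
  then show "measure \<mu> (ball x r) \<le> measure \<mu> (ball x r')"
    using radon_measure_ball_finite[OF assms, of x r'] radon_measure_sets[OF assms]
    by (intro measure_mono_fmeasurable) (auto simp: fmeasurable_def)
qed

lemma borel_measurable_Delta:
  assumes "radon_measure \<mu>"
  shows "Delta s \<mu> x \<in> borel_measurable borel"
proof -
  have [measurable]: "(\<lambda>r. measure \<mu> (ball x r)) \<in> borel_measurable borel"
    by (rule borel_measurable_mono[OF mono_measure_ball[OF assms]])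
  show ?thesis
    unfolding Delta_def[abs_def] by measurable
qed

lemma Delta_dilate:
  assumes "t > 0" "v > 0"
  shows "t powr (-s) * measure \<mu> (ball x (t * v)) - (2*t) powr (-s) * measure \<mu> (ball x (2*t * v))
    = v powr s * Delta s \<mu> x (t * v)"
proof -
  have e: "(t * v) powr s = t powr s * v powr s" "(2 * (t * v)) powr s = (2*t) powr s * v powr s"
    using assms by (simp_all add: powr_mult)
  have p: "t powr s > 0" "(2*t) powr s > 0" "v powr s > 0"
    using assms by simp_all
  have "2*t * v = 2 * (t * v)" by simp
  then show ?thesis
    unfolding Delta_def e using p by (simp add: powr_minus field_simps)
qed

lemma indicator_ball_scaled:
  assumes "c > 0"
  shows "indicator (ball x (c * v)) y = (indicator {dist x y / c<..} v :: real)"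
  using assms by (simp add: indicator_def field_simps)

lemma nn_integral_dilation_div_le:
  fixes f :: "real \<Rightarrow> real"
  assumes [measurable]: "f \<in> borel_measurable borel" and "0 \<le> r1" "1/2 \<le> v" "v \<le> 2"
  shows "(\<integral>\<^sup>+r\<in>{r1..r2}. ennreal (f (r * v) / r) \<partial>lborel)
    \<le> (\<integral>\<^sup>+r\<in>{r1/2..2*r2}. ennreal (f r / r) \<partial>lborel)"
proof -
  define g where "g r = ennreal (f r / r) * indicator {r1/2..2*r2} r" for r
  have [measurable]: "g \<in> borel_measurable borel" unfolding g_def by measurable
  have "(\<integral>\<^sup>+r\<in>{r1..r2}. ennreal (f (r * v) / r) \<partial>lborel) \<le> (\<integral>\<^sup>+r. ennreal v * g (0 + v * r) \<partial>lborel)"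
  proof (rule nn_integral_mono)
    fix r
    show "ennreal (f (r * v) / r) * indicator {r1..r2} r \<le> ennreal v * g (0 + v * r)"
    proof (cases "r \<in> {r1..r2} \<and> r > 0")
      case True
      then have r: "r1 \<le> r" "r \<le> r2" "r > 0" by auto
      have "1/2 * r \<le> v * r" "v * r \<le> 2 * r"
        using assms r by (simp_all add: mult_right_mono)
      then have "r1/2 \<le> v * r" "v * r \<le> 2 * r2"
        using r by linarith+
      then have "v * r \<in> {r1/2..2*r2}"
        by simp
      then have "ennreal v * g (0 + v * r) = ennreal v * ennreal (f (v * r) / (v * r))"
        by (simp add: g_def)
      also have "\<dots> = ennreal (v * (f (v * r) / (v * r)))"
        by (rule ennreal_mult'[symmetric]) (use assms in simp)
      also have "v * (f (v * r) / (v * r)) = f (r * v) / r"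
        using assms True by (simp add: field_simps mult.commute)
      finally show ?thesis using True by simp
    next
      case False
      \<comment> \<open>the only such \<open>r\<close> in \<open>[r1, r2]\<close> is \<open>0\<close>, where \<open>f 0 / 0 = 0\<close> in HOL\<close>
      then have "r \<in> {r1..r2} \<Longrightarrow> r = 0" using assms by auto
      then have "ennreal (f (r * v) / r) * indicator {r1..r2} r = 0"
        by (cases "r \<in> {r1..r2}") auto
      then show ?thesis by (simp only: zero_le)
    qed
  qed
  also have "\<dots> = ennreal v * (\<integral>\<^sup>+r. g (0 + v * r) \<partial>lborel)"
    by (rule nn_integral_cmult) measurable
  also have "\<dots> = (\<integral>\<^sup>+r. g r \<partial>lborel)"
    using nn_integral_real_affine[of g v 0] assms by simp
  finally show ?thesis unfolding g_def .
qed

locale C1_profile =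
  fixes \<phi> :: "real \<Rightarrow> real"
  assumes differentiable: "\<phi> differentiable_on {0<..}"
    and continuous_deriv: "continuous_on {0<..} (deriv \<phi>)"
    and vanishes_beyond_2: "\<forall>u>2. \<phi> u = 0"
    and constant_near_0: "\<forall>u\<in>{0..1/2}. \<phi> u = \<phi> 0"
begin

definition profile_deriv :: "real \<Rightarrow> real" where
  "profile_deriv v = indicator {1/2<..<2} v * deriv \<phi> v"

lemma profile_has_real_derivative: "u > 0 \<Longrightarrow> (\<phi> has_real_derivative deriv \<phi> u) (at u)"
  using differentiable
  by (metis DERIV_deriv_iff_real_differentiable differentiable_on_eq_differentiable_at
      greaterThan_iff open_greaterThan)

lemma vanishes_at_2: "\<phi> 2 = 0"
proof -
  have "(\<phi> \<longlongrightarrow> \<phi> 2) (at_right 2)"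
    using DERIV_isCont[OF profile_has_real_derivative[of 2]] by (simp add: filterlim_at_split isCont_def)
  moreover have "(\<phi> \<longlongrightarrow> 0) (at_right 2)"
    using vanishes_beyond_2
    by (intro tendsto_eventually) (auto simp: eventually_at_right_field intro!: exI[of _ 3])
  ultimately show ?thesis
    using tendsto_unique[OF trivial_limit_at_right_real] by blast
qed

lemma borel_measurable_profile_deriv [measurable]: "profile_deriv \<in> borel_measurable borel"
proof -
  have "(\<lambda>v. indicator {1/2<..<2::real} v *\<^sub>R deriv \<phi> v) \<in> borel_measurable borel"
    by (rule borel_measurable_continuous_on_indicator)
      (auto intro: continuous_on_subset[OF continuous_deriv])
  then show ?thesis unfolding profile_deriv_def by simp
qed

lemma bounded_profile_deriv: "\<exists>B\<ge>0. \<forall>v. \<bar>profile_deriv v\<bar> \<le> B"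
proof -
  have "compact (deriv \<phi> ` {1/2..2})"
    by (rule compact_continuous_image) (auto intro: continuous_on_subset[OF continuous_deriv])
  then obtain B where B: "\<forall>y\<in>deriv \<phi> ` {1/2..2}. norm y \<le> B"
    using compact_imp_bounded bounded_iff by metis
  have "\<bar>profile_deriv v\<bar> \<le> max B 0" for v
  proof (cases "v \<in> {1/2<..<2}")
    case True
    then have "\<bar>deriv \<phi> v\<bar> \<le> B" using B by auto
    then show ?thesis using True by (simp add: profile_deriv_def)
  qed (simp add: profile_deriv_def)
  then show ?thesis by (intro exI[of _ "max B 0"]) auto
qed

lemma integrable_profile_deriv: "integrable lborel profile_deriv"
proof -
  obtain B where B: "\<forall>v. \<bar>profile_deriv v\<bar> \<le> B" using bounded_profile_deriv by blast
  show ?thesis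
  proof (rule integrableI_bounded_set[where A="{1/2<..<2}" and B=B])
    show "AE v in lborel. v \<in> {1/2<..<2} \<longrightarrow> norm (profile_deriv v) \<le> B"
      using B by auto
  qed (auto simp: profile_deriv_def)
qed

text \<open>Since \<open>\<phi>\<close> is constant on \<open>[0, 1/2]\<close>, its derivative may be cut off below \<open>1/2\<close> here.\<close>
lemma profile_eq_integral_deriv:
  assumes "u \<ge> 0"
  shows "\<phi> u = - (\<integral>v. profile_deriv v * indicator {u<..} v \<partial>lborel)"
proof (cases "u \<ge> 2")
  case True
  then have "\<phi> u = 0"
    using vanishes_at_2 vanishes_beyond_2 by (cases "u = 2") simp_all
  moreover have "(\<lambda>v. profile_deriv v * indicator {u<..} v) = (\<lambda>v. 0)"
    using True by (auto simp: profile_deriv_def indicator_def fun_eq_iff)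
  ultimately show ?thesis by simp
next
  case False
  define a where "a = max u (1/2)"
  have a: "1/2 \<le> a" "a < 2" using False by (auto simp: a_def)
  have "\<phi> a = \<phi> u"
  proof (cases "u \<le> 1/2")
    case True
    have "\<phi> (1/2) = \<phi> 0" "\<phi> u = \<phi> 0"
      using True assms by (auto intro: constant_near_0[rule_format])
    moreover have "a = 1/2" using True by (simp add: a_def)
    ultimately show ?thesis by metis
  qed (simp add: a_def)
  have "(\<lambda>v. profile_deriv v * indicator {u<..} v) = (\<lambda>v. indicator {a<..<2} v *\<^sub>R deriv \<phi> v)"
    by (auto simp: profile_deriv_def a_def indicator_def fun_eq_iff)
  then have "(\<integral>v. profile_deriv v * indicator {u<..} v \<partial>lborel) = (LBINT v:{a<..<2}. deriv \<phi> v)"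
    by (simp add: set_lebesgue_integral_def)
  also have "\<dots> = (LBINT v=ereal a..ereal 2. deriv \<phi> v)"
    using a by (simp add: interval_integral_Ioo)
  also have "\<dots> = \<phi> 2 - \<phi> a"
  proof (rule interval_integral_FTC_finite)
    show "continuous_on {min a 2..max a 2} (deriv \<phi>)"
      using a by (auto intro: continuous_on_subset[OF continuous_deriv])
    fix x assume "min a 2 \<le> x" "x \<le> max a 2"
    then have "x > 0" using a by auto
    then show "(\<phi> has_vector_derivative deriv \<phi> x) (at x within {min a 2..max a 2})"
      using has_field_derivative_at_within[OF profile_has_real_derivative]
      by (simp add: has_real_derivative_iff_has_vector_derivative)
  qed
  finally show ?thesis using \<open>\<phi> a = \<phi> u\<close> vanishes_at_2 by simp
qed

lemma phi_scale_eq_integral: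
  assumes "t > 0"
  shows "phi_scale s \<phi> t (dist y x)
    = - (t powr (-s) * (\<integral>v. profile_deriv v * indicator (ball x (t * v)) y \<partial>lborel))"
  using profile_eq_integral_deriv[of "dist x y / t"] assms
  by (simp add: phi_scale_def indicator_ball_scaled dist_commute)

definition shell_kernel :: "real \<Rightarrow> real \<Rightarrow> 'a::metric_space \<Rightarrow> 'a \<Rightarrow> real \<Rightarrow> real" where
  "shell_kernel s t x y v = profile_deriv v *
     (t powr (-s) * indicator (ball x (t * v)) y - (2*t) powr (-s) * indicator (ball x (2*t * v)) y)"

lemma integral_shell_kernel_lborel:
  assumes "t > 0"
  shows "(\<integral>v. shell_kernel s t x y v \<partial>lborel)
    = - (phi_scale s \<phi> t (dist y x) - phi_scale s \<phi> (2*t) (dist y x))"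
proof -
  let ?I = "\<lambda>c. \<integral>v. profile_deriv v * indicator (ball x (c * v)) y \<partial>lborel"
  have int: "integrable lborel (\<lambda>v. profile_deriv v * indicator (ball x (c * v)) y)" if "c > 0" for c
    using integrable_profile_deriv that
    by (simp add: indicator_ball_scaled integrable_real_mult_indicator)
  have "shell_kernel s t x y v = t powr (-s) * (profile_deriv v * indicator (ball x (t * v)) y)
      - (2*t) powr (-s) * (profile_deriv v * indicator (ball x (2*t * v)) y)" for v
    by (simp add: shell_kernel_def algebra_simps)
  then have "(\<integral>v. shell_kernel s t x y v \<partial>lborel) = t powr (-s) * ?I t - (2*t) powr (-s) * ?I (2*t)"
    using int[of t] int[of "2*t"] assms by (simp add: integral_diff)
  then show ?thesis
    using phi_scale_eq_integral[of t s y x] phi_scale_eq_integral[of "2*t" s y x] assms by simp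
qed

lemma integral_shell_kernel_measure:
  assumes "radon_measure \<mu>" "t > 0"
  shows "(\<integral>y. shell_kernel s t x y v \<partial>\<mu>) = profile_deriv v * (v powr s * Delta s \<mu> x (t * v))"
proof (cases "v \<in> {1/2<..<2}")
  case True
  have "(\<integral>y. shell_kernel s t x y v \<partial>\<mu>) = profile_deriv v *
      (t powr (-s) * measure \<mu> (ball x (t * v)) - (2*t) powr (-s) * measure \<mu> (ball x (2*t * v)))"
    unfolding shell_kernel_def
    using radon_measure_ball_finite[OF assms(1)] radon_measure_sets[OF assms(1)]
      radon_measure_space[OF assms(1)]
    by (simp add: integral_diff)
  then show ?thesis
    using True assms(2) by (simp add: Delta_dilate)
qed (simp add: shell_kernel_def profile_deriv_def)

lemma measurable_shell_kernel:
  assumes "sets \<mu> = sets (borel :: 'a::euclidean_space measure)"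
  shows "(\<lambda>(y, v). shell_kernel s t x y v) \<in> borel_measurable (\<mu> \<Otimes>\<^sub>M lborel)"
proof -
  have sets_eq: "sets (\<mu> \<Otimes>\<^sub>M lborel) = sets (borel \<Otimes>\<^sub>M borel)"
    by (rule sets_pair_measure_cong) (auto simp: assms)
  have "(\<lambda>(y, v). shell_kernel s t x y v) = (\<lambda>(y, v). profile_deriv v *
      (t powr (-s) * (if dist x y < t * v then 1 else 0) - (2*t) powr (-s) * (if dist x y < 2*t * v then 1 else 0)))"
    by (simp add: shell_kernel_def indicator_def fun_eq_iff)
  also have "\<dots> \<in> borel_measurable (borel \<Otimes>\<^sub>M borel)"
    by measurable
  finally show ?thesis
    unfolding measurable_cong_sets[OF sets_eq refl] .
qed

lemma shell_kernel_eq_0: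
  assumes "t > 0" "(y, v) \<notin> cball x (4*t) \<times> {1/2<..<2}"
  shows "shell_kernel s t x y v = 0"
proof (cases "v \<in> {1/2<..<2}")
  case True
  then have "dist x y > 4*t" "t * v < 2*t" using assms by auto
  then have "\<not> dist x y < t * v" "\<not> dist x y < 2 * (t * v)" using assms(1) by linarith+
  then show ?thesis by (simp add: shell_kernel_def indicator_def mult.assoc)
qed (simp add: shell_kernel_def profile_deriv_def)

lemma integrable_shell_kernel:
  assumes R: "radon_measure (\<mu>::'a::euclidean_space measure)" and "t > 0"
  shows "integrable (\<mu> \<Otimes>\<^sub>M lborel) (\<lambda>(y, v). shell_kernel s t x y v)"
proof -
  obtain B where B: "\<forall>v. \<bar>profile_deriv v\<bar> \<le> B" using bounded_profile_deriv by blast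
  let ?A = "cball x (4*t) \<times> {1/2<..<2::real}"
  have bound: "\<bar>shell_kernel s t x y v\<bar> \<le> B * (t powr (-s) + (2*t) powr (-s))" for y v
  proof -
    have "\<bar>t powr (-s) * indicator (ball x (t * v)) y - (2*t) powr (-s) * indicator (ball x (2*t * v)) y\<bar>
        \<le> t powr (-s) + (2*t) powr (-s)"
      by (simp add: indicator_def abs_if)
    then show ?thesis
      using B unfolding shell_kernel_def abs_mult by (intro mult_mono) auto
  qed
  show ?thesis
  proof (rule integrableI_bounded_set[where A="?A" and B="B * (t powr (-s) + (2*t) powr (-s))"])
    show "?A \<in> sets (\<mu> \<Otimes>\<^sub>M lborel)"
      by (rule pair_measureI) (auto simp: radon_measure_sets[OF R])
    show "emeasure (\<mu> \<Otimes>\<^sub>M lborel) ?A < \<infinity>"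
      using radon_measure_cball_finite[OF R] radon_measure_sets[OF R]
      by (subst lborel.emeasure_pair_measure_Times) (auto simp: ennreal_mult_less_top)
    show "AE z in \<mu> \<Otimes>\<^sub>M lborel. z \<in> ?A \<longrightarrow>
        norm (case z of (y, v) \<Rightarrow> shell_kernel s t x y v) \<le> B * (t powr (-s) + (2*t) powr (-s))"
      using bound by (simp add: case_prod_beta)
    show "AE z in \<mu> \<Otimes>\<^sub>M lborel. z \<notin> ?A \<longrightarrow> (case z of (y, v) \<Rightarrow> shell_kernel s t x y v) = 0"
    proof (intro AE_I2 impI)
      fix z assume "z \<notin> ?A"
      then show "(case z of (y, v) \<Rightarrow> shell_kernel s t x y v) = 0"
        using shell_kernel_eq_0[OF \<open>t > 0\<close>, where y="fst z" and v="snd z"] by (simp add: case_prod_beta)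
    qed
  qed (rule measurable_shell_kernel[OF radon_measure_sets[OF R]])
qed

lemma Delta_phi_eq_integral_Delta:
  assumes R: "radon_measure (\<mu>::'a::euclidean_space measure)" and "t > 0"
  shows "Delta_phi s \<mu> \<phi> x t = - (\<integral>v. profile_deriv v * (v powr s * Delta s \<mu> x (t * v)) \<partial>lborel)"
proof -
  interpret sigma_finite_measure \<mu> by (rule radon_measure_sigma_finite[OF R])
  interpret pair_sigma_finite \<mu> lborel ..
  have "Delta_phi s \<mu> \<phi> x t = (\<integral>y. - (\<integral>v. shell_kernel s t x y v \<partial>lborel) \<partial>\<mu>)"
    using \<open>t > 0\<close> by (simp add: Delta_phi_def integral_shell_kernel_lborel)
  also have "\<dots> = - (\<integral>y. (\<integral>v. shell_kernel s t x y v \<partial>lborel) \<partial>\<mu>)"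
    by (rule integral_minus)
  also have "(\<integral>y. (\<integral>v. shell_kernel s t x y v \<partial>lborel) \<partial>\<mu>) = (\<integral>v. (\<integral>y. shell_kernel s t x y v \<partial>\<mu>) \<partial>lborel)"
    using Fubini_integral[OF integrable_shell_kernel[OF R \<open>t > 0\<close>]] by simp
  finally show ?thesis
    using R \<open>t > 0\<close> by (simp add: integral_shell_kernel_measure)
qed

lemma abs_Delta_phi_div_le:
  assumes R: "radon_measure (\<mu>::'a::euclidean_space measure)" and "t > 0"
  shows "ennreal (\<bar>Delta_phi s \<mu> \<phi> x t\<bar> / t)
    \<le> (\<integral>\<^sup>+v. ennreal (\<bar>profile_deriv v\<bar> * v powr s) * ennreal (\<bar>Delta s \<mu> x (t * v)\<bar> / t) \<partial>lborel)"
proof -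
  note [measurable] = borel_measurable_Delta[OF R]
  define h where "h v = profile_deriv v * (v powr s * Delta s \<mu> x (t * v))" for v
  have [measurable]: "h \<in> borel_measurable borel" unfolding h_def by measurable
  have "ennreal \<bar>\<integral>v. h v \<partial>lborel\<bar> \<le> (\<integral>\<^sup>+v. ennreal \<bar>h v\<bar> \<partial>lborel)"
    using integral_norm_bound_ennreal[of lborel h] by (cases "integrable lborel h") (auto simp: not_integrable_integral_eq)
  then have "ennreal (1/t) * ennreal \<bar>Delta_phi s \<mu> \<phi> x t\<bar> \<le> ennreal (1/t) * (\<integral>\<^sup>+v. ennreal \<bar>h v\<bar> \<partial>lborel)"
    using Delta_phi_eq_integral_Delta[OF R \<open>t > 0\<close>] by (intro mult_left_mono) (simp_all add: h_def)
  also have "\<dots> = (\<integral>\<^sup>+v. ennreal (1/t) * ennreal \<bar>h v\<bar> \<partial>lborel)"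
    by (rule nn_integral_cmult[symmetric]) measurable
  finally show ?thesis
    using \<open>t > 0\<close> by (simp add: ennreal_mult[symmetric] h_def abs_mult mult.assoc)
qed

lemma nn_integral_profile_weight_finite:
  assumes "s \<ge> 0"
  shows "(\<integral>\<^sup>+v. ennreal (\<bar>profile_deriv v\<bar> * v powr s) \<partial>lborel) < \<infinity>"
proof -
  obtain B where B: "\<forall>v. \<bar>profile_deriv v\<bar> \<le> B" using bounded_profile_deriv by blast
  have "(\<integral>\<^sup>+v. ennreal (\<bar>profile_deriv v\<bar> * v powr s) \<partial>lborel)
      \<le> (\<integral>\<^sup>+v. ennreal (B * 2 powr s) * indicator {1/2<..<2::real} v \<partial>lborel)"
  proof (rule nn_integral_mono)
    fix v :: real
    show "ennreal (\<bar>profile_deriv v\<bar> * v powr s) \<le> ennreal (B * 2 powr s) * indicator {1/2<..<2} v"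
    proof (cases "v \<in> {1/2<..<2}")
      case True
      then have "v powr s \<le> 2 powr s" using assms by (intro powr_mono2) auto
      then have "\<bar>profile_deriv v\<bar> * v powr s \<le> B * 2 powr s"
        using B by (intro mult_mono) auto
      then show ?thesis using True by (simp add: ennreal_leI)
    qed (simp add: profile_deriv_def)
  qed
  also have "\<dots> < \<infinity>"
    by (simp add: nn_integral_cmult_indicator ennreal_mult_less_top)
  finally show ?thesis .
qed

lemma nn_integral_Delta_phi_le:
  assumes R: "radon_measure (\<mu>::'a::euclidean_space measure)" and "0 \<le> r1"
  shows "(\<integral>\<^sup>+r\<in>{r1..r2}. ennreal (\<bar>Delta_phi s \<mu> \<phi> x r\<bar> / r) \<partial>lborel)
    \<le> (\<integral>\<^sup>+v. ennreal (\<bar>profile_deriv v\<bar> * v powr s) \<partial>lborel)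
      * (\<integral>\<^sup>+r\<in>{r1/2..2*r2}. ennreal (\<bar>Delta s \<mu> x r\<bar> / r) \<partial>lborel)"
proof -
  note [measurable] = borel_measurable_Delta[OF R]
  define W where "W v = ennreal (\<bar>profile_deriv v\<bar> * v powr s)" for v
  define I where "I = (\<integral>\<^sup>+r\<in>{r1/2..2*r2}. ennreal (\<bar>Delta s \<mu> x r\<bar> / r) \<partial>lborel)"
  define D where "D v r = ennreal (\<bar>Delta s \<mu> x (r * v)\<bar> / r) * indicator {r1..r2} r" for v r
  have [measurable]: "W \<in> borel_measurable borel" unfolding W_def by measurable
  have [measurable]: "case_prod D \<in> borel_measurable (lborel \<Otimes>\<^sub>M lborel)" unfolding D_def by measurable
  have "(\<integral>\<^sup>+r\<in>{r1..r2}. ennreal (\<bar>Delta_phi s \<mu> \<phi> x r\<bar> / r) \<partial>lborel)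
      \<le> (\<integral>\<^sup>+r. (\<integral>\<^sup>+v. W v * D v r \<partial>lborel) \<partial>lborel)"
  proof (rule nn_integral_mono)
    fix r :: real
    show "ennreal (\<bar>Delta_phi s \<mu> \<phi> x r\<bar> / r) * indicator {r1..r2} r \<le> (\<integral>\<^sup>+v. W v * D v r \<partial>lborel)"
    proof (cases "r > 0")
      case True
      have "(\<integral>\<^sup>+v. W v * D v r \<partial>lborel)
          = (\<integral>\<^sup>+v. W v * ennreal (\<bar>Delta s \<mu> x (r * v)\<bar> / r) \<partial>lborel) * indicator {r1..r2} r"
        unfolding D_def mult.assoc[symmetric] by (rule nn_integral_multc) measurable
      then show ?thesis
        using abs_Delta_phi_div_le[OF R True, of s x]
        by (auto simp: W_def mult.commute[of _ r] intro: mult_right_mono)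
    next
      case False
      then have "r \<in> {r1..r2} \<Longrightarrow> r = 0" using \<open>0 \<le> r1\<close> by auto
      then have "ennreal (\<bar>Delta_phi s \<mu> \<phi> x r\<bar> / r) * indicator {r1..r2} r = 0"
        by (cases "r \<in> {r1..r2}") auto
      then show ?thesis by (simp only: zero_le)
    qed
  qed
  also have "\<dots> = (\<integral>\<^sup>+v. (\<integral>\<^sup>+r. W v * D v r \<partial>lborel) \<partial>lborel)"
    by (rule lborel_pair.Fubini') measurable
  also have "\<dots> = (\<integral>\<^sup>+v. W v * (\<integral>\<^sup>+r\<in>{r1..r2}. ennreal (\<bar>Delta s \<mu> x (r * v)\<bar> / r) \<partial>lborel) \<partial>lborel)"
    unfolding D_def by (intro nn_integral_cong nn_integral_cmult) measurable
  also have "\<dots> \<le> (\<integral>\<^sup>+v. W v * I \<partial>lborel)"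
  proof (intro nn_integral_mono)
    fix v :: real
    show "W v * (\<integral>\<^sup>+r\<in>{r1..r2}. ennreal (\<bar>Delta s \<mu> x (r * v)\<bar> / r) \<partial>lborel)
        \<le> W v * I"
    proof (cases "v \<in> {1/2<..<2}")
      case True
      then show ?thesis
        using nn_integral_dilation_div_le[of "\<lambda>r. \<bar>Delta s \<mu> x r\<bar>" r1 v r2] \<open>0 \<le> r1\<close>
        by (intro mult_left_mono) (auto simp: I_def)
    qed (simp add: W_def profile_deriv_def)
  qed
  also have "\<dots> = (\<integral>\<^sup>+v. W v \<partial>lborel) * I"
    by (rule nn_integral_multc) measurable
  finally show ?thesis unfolding W_def I_def .
qed

end

lemma C_inf_on_imp_C1_profile:
  assumes "C_inf_on {0<..} \<phi>" "\<forall>u>2. \<phi> u = 0" "\<forall>u\<in>{0..1/2}. \<phi> u = \<phi> 0"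
  shows "C1_profile \<phi>"
proof
  show "\<phi> differentiable_on {0<..}"
    using assms(1) unfolding C_inf_on_def by (metis funpow_0)
  show "continuous_on {0<..} (deriv \<phi>)"
    using assms(1)[unfolded C_inf_on_def, rule_format, of 1]
    by (simp add: differentiable_imp_continuous_on)
  show "\<forall>u>2. \<phi> u = 0" by (fact assms(2))
  show "\<forall>u\<in>{0..1/2}. \<phi> u = \<phi> 0" by (fact assms(3))
qed

theorem lemma2p2:
  fixes s :: real and \<phi> :: "real \<Rightarrow> real"
  assumes "s > 0"
    and "C_inf_on {0<..} \<phi>"
    and "\<forall>u>2. \<phi> u = 0"
    and "\<forall>u\<in>{0..1/2}. \<phi> u = \<phi> 0"
  shows "\<exists>c::real. c \<ge> 0 \<and>
    (\<forall>(\<mu>::'a::euclidean_space measure) x r1 r2. radon_measure \<mu> \<longrightarrow> 0 \<le> r1 \<longrightarrow> r1 < r2 \<longrightarrow>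
       (\<integral>\<^sup>+ r\<in>{r1..r2}. ennreal (\<bar>Delta_phi s \<mu> \<phi> x r\<bar> / r) \<partial>lborel)
       \<le> ennreal c * (\<integral>\<^sup>+ r\<in>{r1/2..2*r2}. ennreal (\<bar>Delta s \<mu> x r\<bar> / r) \<partial>lborel))"
proof -
  interpret C1_profile \<phi>
    using assms(2-4) by (rule C_inf_on_imp_C1_profile)
  define W where "W = (\<integral>\<^sup>+v. ennreal (\<bar>profile_deriv v\<bar> * v powr s) \<partial>lborel)"
  have "W < \<infinity>"
    unfolding W_def using assms(1) by (intro nn_integral_profile_weight_finite) simp
  then have "ennreal (enn2real W) = W"
    by (simp add: ennreal_enn2real_if)
  then show ?thesis
    using nn_integral_Delta_phi_le by (intro exI[of _ "enn2real W"]) (auto simp: W_def)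
qed

end
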